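(* The following are equivalent: (1) There exist a strictly positive $f\in\mathrm{Dom}_+(\Gamma)$ and $\epsilon>0$ such that $\Gamma f(x)\le-\epsilon$ for all $x\in\mathbb X$. (2) The explosion time $\zeta$ satisfies $\mathbb E_x\zeta<+\infty$ for all $x\in\mathbb X$.
   Context: Let $\mathbb X$ be a countably infinite set and $\Gamma=(\Gamma_{xy})_{x,y\in\mathbb X}$ a matrix with $\Gamma_{xy}\ge0$ for $y\ne x$, $\gamma_x:=\sum_{y\ne x}\Gamma_{xy}$, $\Gamma_{xx}=-\gamma_x$, and $0<\gamma_x<\infty$ for all $x$. Let $P_{xy}=\Gamma_{xy}/\gamma_x$ for $y\neq x$ and $P_{xx}=0$; the discrete-time Markov chain $(\tilde\xi_n)_{n\ge0}$ with transition matrix $P$ (embedded jump chain) is assumed irreducible. The continuous-time Markov chain $(\xi_t)_{t\ge0}$ with generator $\Gamma$: conditionally on $\tilde\xi$, holding times $\sigma_n$ ($n\ge1$) are independent exponential with parameter $\gamma_{\tilde\xi_{n-1}}$; $J_0=0$, $J_n=\sigma_1+\dots+\sigma_n$; the explosion time is $\zeta=\lim_n J_n$; $\xi_t=\tilde\xi_n$ for $J_n\le t<J_{n+1}$, and $\xi_t=\partial$ (cemetery) for $t\ge\zeta$. $\mathbb E_x$ refers to $\xi_0=x$. $\mathrm{Dom}(\Gamma)=\{f:\mathbb X\to\mathbb R:\ \sum_{y\ne x}\Gamma_{xy}|f(y)|<\infty\ \forall x\}$, $\mathrm{Dom}_+(\Gamma)$ its non-negative elements, and $\Gamma f(x)=\sum_{y}\Gamma_{xy}f(y)$.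 *)

theory Defs
  imports "HOL-Probability.Probability"
begin

definition gam :: "('a \<Rightarrow> 'a \<Rightarrow> real) \<Rightarrow> 'a \<Rightarrow> real" where
  "gam \<Gamma> x = (\<Sum>\<^sub>\<infinity>y\<in>UNIV - {x}. \<Gamma> x y)"

definition rate_matrix :: "('a \<Rightarrow> 'a \<Rightarrow> real) \<Rightarrow> bool" where
  "rate_matrix \<Gamma> \<longleftrightarrow>
     (\<forall>x y. y \<noteq> x \<longrightarrow> 0 \<le> \<Gamma> x y) \<and>
     (\<forall>x. (\<Gamma> x) summable_on (UNIV - {x})) \<and>
     (\<forall>x. \<Gamma> x x = - gam \<Gamma> x) \<and>
     (\<forall>x. 0 < gam \<Gamma> x)"

definition jumpP :: "('a \<Rightarrow> 'a \<Rightarrow> real) \<Rightarrow> 'a \<Rightarrow> 'a \<Rightarrow> real" where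
  "jumpP \<Gamma> x y = (if y = x then 0 else \<Gamma> x y / gam \<Gamma> x)"

definition irreducible_jump :: "('a \<Rightarrow> 'a \<Rightarrow> real) \<Rightarrow> bool" where
  "irreducible_jump \<Gamma> \<longleftrightarrow>
     (\<forall>x y. \<exists>n xs. xs 0 = x \<and> xs n = y \<and> (\<forall>i<n. 0 < jumpP \<Gamma> (xs i) (xs (Suc i))))"

definition Dom :: "('a \<Rightarrow> 'a \<Rightarrow> real) \<Rightarrow> ('a \<Rightarrow> real) set" where
  "Dom \<Gamma> = {f. \<forall>x. (\<lambda>y. \<Gamma> x y * \<bar>f y\<bar>) summable_on (UNIV - {x})}"

definition Dom_plus :: "('a \<Rightarrow> 'a \<Rightarrow> real) \<Rightarrow> ('a \<Rightarrow> real) set" where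
  "Dom_plus \<Gamma> = {f \<in> Dom \<Gamma>. \<forall>x. 0 \<le> f x}"

definition gen_apply :: "('a \<Rightarrow> 'a \<Rightarrow> real) \<Rightarrow> ('a \<Rightarrow> real) \<Rightarrow> 'a \<Rightarrow> real" where
  "gen_apply \<Gamma> f x = (\<Sum>\<^sub>\<infinity>y. \<Gamma> x y * f y)"

text \<open>A realisation of the chain started at x on a probability space M:
  Xi n = embedded jump chain (Markov with transition jumpP, Xi 0 = x),
  Ee n = i.i.d. Exp(1) variables independent of the jump chain; the n+1-st holding time is
  sigma (n+1) = Ee n / gam (Xi n), which, conditionally on the jump chain, gives independent
  exponential holding times with parameters gam (Xi n).\<close>
definition ctmc_model ::
  "('a \<Rightarrow> 'a \<Rightarrow> real) \<Rightarrow> 'a \<Rightarrow> 'w measure \<Rightarrow> (nat \<Rightarrow> 'w \<Rightarrow> 'a) \<Rightarrow> (nat \<Rightarrow> 'w \<Rightarrow> real) \<Rightarrow> bool" where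
  "ctmc_model \<Gamma> x M Xi Ee \<longleftrightarrow>
     prob_space M \<and>
     (\<forall>n. Xi n \<in> measurable M (count_space UNIV)) \<and>
     (\<forall>n (xs :: nat \<Rightarrow> 'a).
        measure M {\<omega> \<in> space M. \<forall>i\<le>n. Xi i \<omega> = xs i}
          = (if xs 0 = x then 1 else 0) * (\<Prod>i<n. jumpP \<Gamma> (xs i) (xs (Suc i)))) \<and>
     (\<forall>n. distributed M lborel (Ee n) (\<lambda>t. ennreal (exponential_density 1 t))) \<and>
     prob_space.indep_vars M (\<lambda>_. borel) Ee UNIV \<and>
     prob_space.indep_set M
        {(\<lambda>\<omega> n. Xi n \<omega>) -` S \<inter> space M | S. S \<in> sets (Pi\<^sub>M UNIV (\<lambda>_. count_space UNIV))}
        {(\<lambda>\<omega> n. Ee n \<omega>) -` S \<inter> space M | S. S \<in> sets (Pi\<^sub>M UNIV (\<lambda>_. borel))}"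

definition explosion_time ::
  "('a \<Rightarrow> 'a \<Rightarrow> real) \<Rightarrow> (nat \<Rightarrow> 'w \<Rightarrow> 'a) \<Rightarrow> (nat \<Rightarrow> 'w \<Rightarrow> real) \<Rightarrow> 'w \<Rightarrow> ennreal" where
  "explosion_time \<Gamma> Xi Ee \<omega> = (\<Sum>n. ennreal (Ee n \<omega> / gam \<Gamma> (Xi n \<omega>)))"

end

theory Submission
  imports Defs
begin

text \<open>
  Let \<open>h x = 1 / \<gamma>\<^sub>x\<close> be the mean holding time in \<open>x\<close> and \<open>P\<close> the jump operator. Since the
  holding times are independent of the jump chain, \<open>E\<^sub>x \<zeta> = \<Sum>\<^sub>n (P\<^sup>n h) x =: g x\<close>, the Green
  potential of \<open>h\<close>. It is the minimal non-negative solution of \<open>g = h + P g\<close>, and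
  \<open>\<Gamma> f \<le> -\<epsilon>\<close> says precisely that \<open>\<epsilon> h + P f \<le> f\<close>; hence \<open>\<epsilon> g \<le> f < \<infinity>\<close>.
  Conversely, if \<open>g\<close> is finite then \<open>\<Gamma> g = -1\<close>, so \<open>f = g\<close>, \<open>\<epsilon> = 1\<close> work.
  The second direction needs one realisation of the chain from every state, which is
  built on a product space of independent jump choices and exponential clocks.
\<close>

lemma nn_integral_count_space_eq_infsum:
  fixes f :: "'b \<Rightarrow> real"
  assumes "f summable_on A" "\<And>x. x \<in> A \<Longrightarrow> 0 \<le> f x"
  shows "(\<integral>\<^sup>+x. ennreal (f x) \<partial>count_space A) = ennreal (infsum f A)"
proof -
  have "(\<lambda>x. norm (f x)) summable_on A"
    using assms by (subst summable_on_cong[where g=f]) auto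
  then have "Infinite_Set_Sum.abs_summable_on f A" using abs_summable_equivalent by blast
  then show ?thesis using assms
    by (simp add: nn_integral_conv_infsetsum infsetsum_infsum)
qed

lemma summable_on_if_nn_integral_count_space_finite:
  fixes f :: "'b \<Rightarrow> real"
  assumes "(\<integral>\<^sup>+x. ennreal (f x) \<partial>count_space A) \<noteq> \<infinity>" "\<And>x. x \<in> A \<Longrightarrow> 0 \<le> f x"
  shows "f summable_on A"
proof -
  have "integrable (count_space A) f"
  proof (rule integrableI_bounded)
    have "(\<integral>\<^sup>+x. ennreal (norm (f x)) \<partial>count_space A) = (\<integral>\<^sup>+x. ennreal (f x) \<partial>count_space A)"
      using assms(2) by (intro nn_integral_cong) auto
    then show "(\<integral>\<^sup>+x. ennreal (norm (f x)) \<partial>count_space A) < \<infinity>"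
      using assms(1) by (simp add: top.not_eq_extremum)
  qed auto
  then have "Infinite_Set_Sum.abs_summable_on f A" by (simp add: abs_summable_on_def)
  then have "(\<lambda>x. norm (f x)) summable_on A" using abs_summable_equivalent by blast
  then show ?thesis using assms by (subst (asm) summable_on_cong[where g=f]) auto
qed

lemma vimage_component_in_process_events:
  fixes N :: "'b measure" and Y :: "nat \<Rightarrow> 'w \<Rightarrow> 'b"
  assumes "B \<in> sets N" "space N = UNIV"
  shows "Y n -` B \<inter> space M \<in> {(\<lambda>\<omega> n. Y n \<omega>) -` S \<inter> space M | S. S \<in> sets (Pi\<^sub>M UNIV (\<lambda>_. N))}"
proof -
  define S where "S = (\<lambda>f. f n) -` B \<inter> space (Pi\<^sub>M UNIV (\<lambda>_. N))"
  have "S \<in> sets (Pi\<^sub>M UNIV (\<lambda>_. N))"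
    unfolding S_def using measurable_sets[OF measurable_component_singleton[of n UNIV "\<lambda>_. N"] assms(1)]
    by simp
  moreover have "Y n -` B \<inter> space M = (\<lambda>\<omega> n. Y n \<omega>) -` S \<inter> space M"
    unfolding S_def using assms(2) by (auto simp: space_PiM)
  ultimately show ?thesis by blast
qed

section \<open>The jump operator and the Green potential of the holding times\<close>

locale jump_rates =
  fixes G :: "'a::countable \<Rightarrow> 'a \<Rightarrow> real"
  assumes rate_matrix: "rate_matrix G"
begin

lemma rate_nonneg: "y \<noteq> x \<Longrightarrow> 0 \<le> G x y"
  using rate_matrix by (auto simp: rate_matrix_def)

lemma rate_summable: "(G x) summable_on (UNIV - {x})"
  using rate_matrix by (auto simp: rate_matrix_def)

lemma rate_diag: "G x x = - gam G x"
  using rate_matrix by (auto simp: rate_matrix_def)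

lemma gam_pos: "0 < gam G x"
  using rate_matrix by (auto simp: rate_matrix_def)

lemma jumpP_nonneg: "0 \<le> jumpP G x y"
  using rate_nonneg gam_pos[of x] by (auto simp: jumpP_def)

lemma nn_integral_jumpP: "(\<integral>\<^sup>+y. ennreal (jumpP G x y) \<partial>count_space UNIV) = 1"
proof -
  have "(\<integral>\<^sup>+y. ennreal (jumpP G x y) \<partial>count_space UNIV)
      = (\<integral>\<^sup>+y. ennreal (G x y / gam G x) \<partial>count_space (UNIV - {x}))"
    by (rule trans[OF nn_integral_count_space_eq[where B="UNIV - {x}"]])
       (auto simp: jumpP_def intro!: nn_integral_cong)
  also have "\<dots> = ennreal (infsum (\<lambda>y. G x y / gam G x) (UNIV - {x}))"
    using rate_summable[of x] rate_nonneg[of _ x] gam_pos[of x]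
    by (intro nn_integral_count_space_eq_infsum)
       (auto intro!: summable_on_cmult_left simp: divide_inverse)
  also have "infsum (\<lambda>y. G x y / gam G x) (UNIV - {x}) = 1"
    using gam_pos[of x] by (simp add: divide_inverse infsum_cmult_left' gam_def[symmetric])
  finally show ?thesis by simp
qed

definition jump_op :: "('a \<Rightarrow> ennreal) \<Rightarrow> 'a \<Rightarrow> ennreal" where
  "jump_op \<phi> x = (\<integral>\<^sup>+y. ennreal (jumpP G x y) * \<phi> y \<partial>count_space UNIV)"

definition mean_holding :: "'a \<Rightarrow> ennreal" where
  "mean_holding x = ennreal (1 / gam G x)"

definition green :: "'a \<Rightarrow> ennreal" where
  "green x = (\<Sum>n. (jump_op ^^ n) mean_holding x)"

lemma jump_op_mono: "(\<And>y. \<phi> y \<le> \<psi> y) \<Longrightarrow> jump_op \<phi> x \<le> jump_op \<psi> x"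
  unfolding jump_op_def by (intro nn_integral_mono mult_left_mono) auto

lemma jump_op_suminf: "jump_op (\<lambda>y. \<Sum>n. F n y) x = (\<Sum>n. jump_op (F n) x)"
  unfolding jump_op_def ennreal_suminf_cmult[symmetric] by (rule nn_integral_suminf) simp

lemma jump_op_add: "jump_op (\<lambda>y. \<phi> y + \<psi> y) x = jump_op \<phi> x + jump_op \<psi> x"
  unfolding jump_op_def by (simp add: distrib_left nn_integral_add)

lemma jump_op_cmult: "jump_op (\<lambda>y. c * \<phi> y) x = c * jump_op \<phi> x"
  unfolding jump_op_def by (subst nn_integral_cmult[symmetric]) (auto simp: ac_simps)

lemma jump_op_sum: "jump_op (\<lambda>y. \<Sum>n<N. F n y) x = (\<Sum>n<N. jump_op (F n) x)"
  unfolding jump_op_def by (simp add: nn_integral_sum sum_distrib_left)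

lemma green_unfold: "green x = mean_holding x + jump_op green x"
proof -
  have "green x = (\<Sum>j. (jump_op ^^ (j + 1)) mean_holding x) + (jump_op ^^ 0) mean_holding x"
    using suminf_offset[of "\<lambda>n. (jump_op ^^ n) mean_holding x" 1] unfolding green_def
    by (simp add: summableI)
  also have "(\<Sum>j. (jump_op ^^ (j + 1)) mean_holding x) = (\<Sum>j. jump_op ((jump_op ^^ j) mean_holding) x)"
    by simp
  also have "\<dots> = jump_op green x"
    unfolding green_def by (rule jump_op_suminf[symmetric])
  finally show ?thesis by (simp add: add.commute)
qed

lemma green_le_supersolution:
  assumes super: "\<And>x. c * mean_holding x + jump_op f x \<le> f x"
  shows "c * green x \<le> f x"
proof -
  have partial: "c * (\<Sum>n<N. (jump_op ^^ n) mean_holding x) + (jump_op ^^ N) f x \<le> f x" for N x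
  proof (induction N arbitrary: x)
    case 0
    then show ?case by simp
  next
    case (Suc N)
    have "c * (\<Sum>n<Suc N. (jump_op ^^ n) mean_holding x) + (jump_op ^^ Suc N) f x
        = c * mean_holding x
          + jump_op (\<lambda>y. c * (\<Sum>n<N. (jump_op ^^ n) mean_holding y) + (jump_op ^^ N) f y) x"
      by (simp add: lessThan_Suc_eq_insert_0 sum.reindex jump_op_sum jump_op_add jump_op_cmult
          distrib_left add.assoc del: funpow.simps) (simp add: funpow_Suc_right)
    also have "\<dots> \<le> c * mean_holding x + jump_op f x"
      by (intro add_left_mono jump_op_mono Suc.IH)
    also have "\<dots> \<le> f x" by (rule super)
    finally show ?case .
  qed
  have "c * green x = (\<Sum>n. c * (jump_op ^^ n) mean_holding x)"
    unfolding green_def by simp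
  also have "\<dots> \<le> f x"
  proof (intro suminf_le_const summableI)
    fix N
    have "(\<Sum>n<N. c * (jump_op ^^ n) mean_holding x)
        \<le> c * (\<Sum>n<N. (jump_op ^^ n) mean_holding x) + (jump_op ^^ N) f x"
      by (simp add: sum_distrib_left)
    also have "\<dots> \<le> f x" by (rule partial)
    finally show "(\<Sum>n<N. c * (jump_op ^^ n) mean_holding x) \<le> f x" .
  qed
  finally show ?thesis .
qed

lemma gen_apply_eq_off_diagonal:
  assumes "(\<lambda>y. G x y * f y) summable_on (UNIV - {x})"
  shows "gen_apply G f x = - gam G x * f x + infsum (\<lambda>y. G x y * f y) (UNIV - {x})"
proof -
  have "gen_apply G f x = infsum (\<lambda>y. G x y * f y) (insert x (UNIV - {x}))"
    unfolding gen_apply_def by (simp add: insert_absorb)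
  also have "\<dots> = G x x * f x + infsum (\<lambda>y. G x y * f y) (UNIV - {x})"
    by (rule infsum_insert[OF assms]) auto
  finally show ?thesis by (simp add: rate_diag)
qed

lemma nn_integral_off_diagonal:
  assumes "\<And>y. 0 \<le> f y"
  shows "(\<integral>\<^sup>+y. ennreal (G x y * f y) \<partial>count_space (UNIV - {x}))
       = ennreal (gam G x) * jump_op (\<lambda>y. ennreal (f y)) x"
  unfolding jump_op_def
  apply (subst nn_integral_cmult[symmetric], simp)
  apply (rule trans[OF _ nn_integral_count_space_eq[where A="UNIV - {x}"]])
  using gam_pos[of x] rate_nonneg[of _ x] assms
  by (auto simp: jumpP_def ennreal_mult'[symmetric] intro!: nn_integral_cong)

lemma jump_op_ennreal:
  assumes "(\<lambda>y. G x y * f y) summable_on (UNIV - {x})" "\<And>y. 0 \<le> f y"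
  shows "jump_op (\<lambda>y. ennreal (f y)) x = ennreal (infsum (\<lambda>y. G x y * f y) (UNIV - {x}) / gam G x)"
proof -
  let ?S = "infsum (\<lambda>y. G x y * f y) (UNIV - {x})"
  have "jump_op (\<lambda>y. ennreal (f y)) x * ennreal (gam G x) = ennreal ?S"
    unfolding mult.commute[of _ "ennreal (gam G x)"] nn_integral_off_diagonal[OF assms(2), symmetric]
    using assms rate_nonneg[of _ x] by (intro nn_integral_count_space_eq_infsum) auto
  then have "jump_op (\<lambda>y. ennreal (f y)) x = ennreal ?S / ennreal (gam G x)"
    using gam_pos[of x] by (metis ennreal_mult_divide_eq ennreal_eq_0_iff ennreal_neq_top not_le)
  moreover have "0 \<le> ?S"
    using rate_nonneg[of _ x] assms(2) by (intro infsum_nonneg) auto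
  ultimately show ?thesis
    using gam_pos[of x] by (simp add: divide_ennreal)
qed

lemma lyapunov_supersolution:
  assumes f: "f \<in> Dom_plus G" and e: "0 \<le> e" and drift: "gen_apply G f x \<le> - e"
  shows "ennreal e * mean_holding x + jump_op (\<lambda>y. ennreal (f y)) x \<le> ennreal (f x)"
proof -
  have nonneg: "\<And>y. 0 \<le> f y" and summable: "(\<lambda>y. G x y * f y) summable_on (UNIV - {x})"
    using f by (auto simp: Dom_plus_def Dom_def)
  define S where "S = infsum (\<lambda>y. G x y * f y) (UNIV - {x})"
  have S: "0 \<le> S"
    unfolding S_def using rate_nonneg nonneg by (intro infsum_nonneg) auto
  have "- gam G x * f x + S \<le> - e"
    using drift gen_apply_eq_off_diagonal[OF summable] unfolding S_def by simp
  then have le: "e / gam G x + S / gam G x \<le> f x"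
    using gam_pos[of x] by (simp add: field_simps)
  have "ennreal e * mean_holding x + jump_op (\<lambda>y. ennreal (f y)) x
      = ennreal (e / gam G x) + ennreal (S / gam G x)"
    using e gam_pos[of x]
    by (simp add: mean_holding_def jump_op_ennreal[OF summable nonneg] S_def ennreal_mult[symmetric])
  also have "\<dots> = ennreal (e / gam G x + S / gam G x)"
    using e gam_pos[of x] S by (subst ennreal_plus) auto
  also have "\<dots> \<le> ennreal (f x)"
    using le by (rule ennreal_leI)
  finally show ?thesis .
qed

lemma green_finite_if_lyapunov:
  assumes f: "f \<in> Dom_plus G" and e: "0 < e" and drift: "\<And>x. gen_apply G f x \<le> - e"
  shows "green x < \<infinity>"
proof -
  have "ennreal e * green x \<le> ennreal (f x)"
    by (rule green_le_supersolution, rule lyapunov_supersolution[OF f _ drift]) (use e in simp)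
  then have "ennreal e * green x \<noteq> \<infinity>"
    by (auto simp: top_unique)
  then show ?thesis
    using e by (simp add: ennreal_mult_eq_top_iff less_top)
qed

lemma mean_holding_le_green: "mean_holding x \<le> green x"
  unfolding green_unfold[of x] by simp

context
  assumes green_finite: "\<And>x. green x < \<infinity>"
begin

lemma green_eq_ennreal: "green = (\<lambda>y. ennreal (enn2real (green y)))"
  using green_finite by (auto simp: less_top)

lemma summable_off_diagonal_green: "(\<lambda>y. G x y * enn2real (green y)) summable_on (UNIV - {x})"
proof (rule summable_on_if_nn_integral_count_space_finite)
  define g where "g y = enn2real (green y)" for y
  have green_g: "green = (\<lambda>y. ennreal (g y))"
    unfolding g_def by (rule green_eq_ennreal)
  have "jump_op green x \<le> green x"
    using green_unfold[of x] by (simp add: le_iff_add add.commute)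
  then have "jump_op green x < \<infinity>"
    using green_finite[of x] by (rule order.strict_trans1)
  then show "(\<integral>\<^sup>+y. ennreal (G x y * enn2real (green y)) \<partial>count_space (UNIV - {x})) \<noteq> \<infinity>"
    using gam_pos[of x] unfolding g_def[symmetric] green_g
    by (subst nn_integral_off_diagonal) (auto simp: g_def ennreal_mult_eq_top_iff)
qed (use rate_nonneg in auto)

lemma gen_apply_green: "gen_apply G (\<lambda>y. enn2real (green y)) x = -1"
proof -
  define g where "g y = enn2real (green y)" for y
  have green_g: "green = (\<lambda>y. ennreal (g y))"
    unfolding g_def by (rule green_eq_ennreal)
  have summable: "(\<lambda>y. G x y * g y) summable_on (UNIV - {x})"
    unfolding g_def by (rule summable_off_diagonal_green)
  have g_nonneg: "0 \<le> g y" for y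
    by (simp add: g_def)
  define S where "S = infsum (\<lambda>y. G x y * g y) (UNIV - {x})"
  have S: "0 \<le> S"
    unfolding S_def g_def using rate_nonneg by (intro infsum_nonneg) auto
  have "ennreal (g x) = ennreal (1 / gam G x) + ennreal (S / gam G x)"
    using green_unfold[of x] unfolding green_g
    by (simp add: mean_holding_def S_def jump_op_ennreal[OF summable g_nonneg])
  also have "\<dots> = ennreal (1 / gam G x + S / gam G x)"
    using gam_pos[of x] S by (simp add: ennreal_plus)
  finally have "g x = 1 / gam G x + S / gam G x"
    using gam_pos[of x] S by (subst (asm) ennreal_inj) (auto simp: g_def)
  then show ?thesis
    using gen_apply_eq_off_diagonal[OF summable] gam_pos[of x]
    unfolding S_def[symmetric] g_def[symmetric] by (simp add: field_simps)
qed

lemma lyapunov_if_green_finite: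
  "\<exists>f \<in> Dom_plus G. \<exists>\<epsilon>::real. (\<forall>x. 0 < f x) \<and> 0 < \<epsilon> \<and> (\<forall>x. gen_apply G f x \<le> - \<epsilon>)"
proof (intro bexI exI conjI allI)
  show "(\<lambda>y. enn2real (green y)) \<in> Dom_plus G"
    using summable_off_diagonal_green by (simp add: Dom_plus_def Dom_def)
  show "0 < enn2real (green x)" for x
  proof -
    have "0 < mean_holding x"
      using gam_pos[of x] by (simp add: mean_holding_def)
    then show ?thesis
      using mean_holding_le_green[of x] green_finite[of x]
      by (auto simp: enn2real_positive_iff intro: order.strict_trans2)
  qed
qed (auto simp: gen_apply_green)

end

end


section \<open>Expected explosion time of a realisation\<close>

locale ctmc_realisation = jump_rates G for G :: "'a::countable \<Rightarrow> 'a \<Rightarrow> real" +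
  fixes x :: 'a and M :: "'w measure" and Xi :: "nat \<Rightarrow> 'w \<Rightarrow> 'a" and Ee :: "nat \<Rightarrow> 'w \<Rightarrow> real"
  assumes model: "ctmc_model G x M Xi Ee"
begin

sublocale prob_space M
  using model by (simp add: ctmc_model_def)

lemma measurable_Xi[measurable]: "Xi n \<in> measurable M (count_space UNIV)"
  using model by (simp add: ctmc_model_def)

lemma measure_path:
  "measure M {\<omega> \<in> space M. \<forall>i\<le>n. Xi i \<omega> = xs i}
     = (if xs 0 = x then 1 else 0) * (\<Prod>i<n. jumpP G (xs i) (xs (Suc i)))"
  using model by (simp add: ctmc_model_def)

lemma distributed_Ee: "distributed M lborel (Ee n) (\<lambda>t. ennreal (exponential_density 1 t))"
  using model by (simp add: ctmc_model_def)

lemma measurable_Ee[measurable]: "Ee n \<in> borel_measurable M"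
  using distributed_measurable[OF distributed_Ee[of n]] by simp

lemma indep_jumps_holdings:
  "indep_set
     {(\<lambda>\<omega> n. Xi n \<omega>) -` S \<inter> space M | S. S \<in> sets (Pi\<^sub>M UNIV (\<lambda>_. count_space UNIV))}
     {(\<lambda>\<omega> n. Ee n \<omega>) -` S \<inter> space M | S. S \<in> sets (Pi\<^sub>M UNIV (\<lambda>_. borel))}"
  using model by (simp add: ctmc_model_def)

definition state_set :: "nat \<Rightarrow> 'a \<Rightarrow> 'w set" where
  "state_set n y = {\<omega> \<in> space M. Xi n \<omega> = y}"

definition path_set :: "nat \<Rightarrow> (nat \<Rightarrow> 'a) \<Rightarrow> 'w set" where
  "path_set n xs = {\<omega> \<in> space M. \<forall>i\<le>n. Xi i \<omega> = xs i}"

lemma state_set_sets[measurable]: "state_set n y \<in> sets M"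
  unfolding state_set_def by measurable

lemma path_set_sets[measurable]: "path_set n xs \<in> sets M"
  unfolding path_set_def by measurable

lemma emeasure_path_set:
  "emeasure M (path_set n xs)
     = ennreal ((if xs 0 = x then 1 else 0) * (\<Prod>i<n. jumpP G (xs i) (xs (Suc i))))"
  using measure_path[of n xs] by (simp add: emeasure_eq_measure path_set_def)

lemma nn_integral_state:
  "(\<integral>\<^sup>+\<omega>. \<phi> (Xi n \<omega>) \<partial>M) = (\<integral>\<^sup>+y. \<phi> y * emeasure M (state_set n y) \<partial>count_space UNIV)"
proof -
  have "(\<integral>\<^sup>+\<omega>. \<phi> (Xi n \<omega>) \<partial>M)
      = (\<integral>\<^sup>+\<omega>. \<integral>\<^sup>+y. \<phi> y * indicator (state_set n y) \<omega> \<partial>count_space UNIV \<partial>M)"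
  proof (intro nn_integral_cong)
    fix \<omega> assume "\<omega> \<in> space M"
    then have "\<And>y. indicator (state_set n y) \<omega> = (indicator {Xi n \<omega>} y :: ennreal)"
      by (auto simp: state_set_def split: split_indicator)
    then show "\<phi> (Xi n \<omega>) = (\<integral>\<^sup>+y. \<phi> y * indicator (state_set n y) \<omega> \<partial>count_space UNIV)"
      by simp
  qed
  also have "\<dots> = (\<integral>\<^sup>+y. \<integral>\<^sup>+\<omega>. \<phi> y * indicator (state_set n y) \<omega> \<partial>M \<partial>count_space UNIV)"
    by (rule nn_integral_count_space_nn_integral) auto
  also have "\<dots> = (\<integral>\<^sup>+y. \<phi> y * emeasure M (state_set n y) \<partial>count_space UNIV)"
    by (intro nn_integral_cong nn_integral_cmult_indicator) auto
  finally show ?thesis .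
qed

lemma emeasure_state_set_0: "emeasure M (state_set 0 y) = (if y = x then 1 else 0)"
proof -
  have "state_set 0 y = path_set 0 (\<lambda>_. y)"
    by (auto simp: state_set_def path_set_def)
  then show ?thesis by (simp add: emeasure_path_set)
qed

lemma path_sets_disjoint:
  assumes "xs \<in> {..n} \<rightarrow>\<^sub>E UNIV" "xs' \<in> {..n} \<rightarrow>\<^sub>E UNIV" "xs \<noteq> xs'" "n \<le> m"
    "\<And>i. i \<le> n \<Longrightarrow> ys i = xs i" "\<And>i. i \<le> n \<Longrightarrow> ys' i = xs' i"
  shows "path_set m ys \<inter> path_set m ys' = {}"
proof -
  obtain i where "i \<le> n" "xs i \<noteq> xs' i"
    using assms(1-3) by (metis PiE_ext atMost_iff)
  then show ?thesis
    using assms(4-6) by (auto simp: path_set_def)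
qed

definition paths_ending :: "nat \<Rightarrow> 'a \<Rightarrow> (nat \<Rightarrow> 'a) set" where
  "paths_ending n y = {xs \<in> {..n} \<rightarrow>\<^sub>E UNIV. xs n = y}"

lemma countable_paths_ending: "countable (paths_ending n y)"
  unfolding paths_ending_def
  by (rule countable_subset[OF _ countable_PiE[of "{..n}" "\<lambda>_. UNIV"]]) auto

lemma state_set_eq_UN_path_set: "state_set n y = (\<Union>xs\<in>paths_ending n y. path_set n xs)"
proof (intro equalityI subsetI)
  fix \<omega> assume "\<omega> \<in> state_set n y"
  then have "restrict (\<lambda>i. Xi i \<omega>) {..n} \<in> paths_ending n y"
    "\<omega> \<in> path_set n (restrict (\<lambda>i. Xi i \<omega>) {..n})"
    by (auto simp: state_set_def path_set_def paths_ending_def)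
  then show "\<omega> \<in> (\<Union>xs\<in>paths_ending n y. path_set n xs)" by blast
qed (auto simp: state_set_def path_set_def paths_ending_def)

lemma state_transition_eq_UN_path_set:
  "state_set n y \<inter> state_set (Suc n) z = (\<Union>xs\<in>paths_ending n y. path_set (Suc n) (xs(Suc n := z)))"
proof (intro equalityI subsetI)
  fix \<omega> assume "\<omega> \<in> state_set n y \<inter> state_set (Suc n) z"
  then have "restrict (\<lambda>i. Xi i \<omega>) {..n} \<in> paths_ending n y"
    "\<omega> \<in> path_set (Suc n) ((restrict (\<lambda>i. Xi i \<omega>) {..n})(Suc n := z))"
    by (auto simp: state_set_def path_set_def paths_ending_def le_Suc_eq)
  then show "\<omega> \<in> (\<Union>xs\<in>paths_ending n y. path_set (Suc n) (xs(Suc n := z)))" by blast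
next
  fix \<omega> assume "\<omega> \<in> (\<Union>xs\<in>paths_ending n y. path_set (Suc n) (xs(Suc n := z)))"
  then obtain xs where "xs \<in> paths_ending n y" "\<omega> \<in> path_set (Suc n) (xs(Suc n := z))" by blast
  then show "\<omega> \<in> state_set n y \<inter> state_set (Suc n) z"
    unfolding state_set_def path_set_def paths_ending_def by (auto dest: spec[of _ n] spec[of _ "Suc n"])
qed

lemma emeasure_path_set_extend:
  assumes "xs \<in> paths_ending n y"
  shows "emeasure M (path_set (Suc n) (xs(Suc n := z))) = emeasure M (path_set n xs) * ennreal (jumpP G y z)"
proof -
  have "(\<Prod>i<Suc n. jumpP G ((xs(Suc n := z)) i) ((xs(Suc n := z)) (Suc i)))
      = (\<Prod>i<n. jumpP G (xs i) (xs (Suc i))) * jumpP G y z"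
    using assms by (simp add: paths_ending_def)
  then show ?thesis
    unfolding emeasure_path_set
    by (simp add: ennreal_mult'[symmetric] jumpP_nonneg prod_nonneg mult.assoc)
qed

lemma emeasure_state_transition:
  "emeasure M (state_set n y \<inter> state_set (Suc n) z) = emeasure M (state_set n y) * ennreal (jumpP G y z)"
proof -
  let ?Q = "paths_ending n y"
  have "disjoint_family_on (path_set n) ?Q"
    "disjoint_family_on (\<lambda>xs. path_set (Suc n) (xs(Suc n := z))) ?Q"
    unfolding disjoint_family_on_def
    by (intro ballI impI path_sets_disjoint[where n=n]; simp add: paths_ending_def)+
  note emeasure_UN = emeasure_UN_countable[OF _ countable_paths_ending this(1)]
    emeasure_UN_countable[OF _ countable_paths_ending this(2)]
  have "emeasure M (state_set n y \<inter> state_set (Suc n) z)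
      = (\<integral>\<^sup>+xs. emeasure M (path_set (Suc n) (xs(Suc n := z))) \<partial>count_space ?Q)"
    unfolding state_transition_eq_UN_path_set by (rule emeasure_UN(2)) auto
  also have "\<dots> = (\<integral>\<^sup>+xs. emeasure M (path_set n xs) * ennreal (jumpP G y z) \<partial>count_space ?Q)"
    by (intro nn_integral_cong) (simp add: emeasure_path_set_extend)
  also have "\<dots> = (\<integral>\<^sup>+xs. emeasure M (path_set n xs) \<partial>count_space ?Q) * ennreal (jumpP G y z)"
    by (rule nn_integral_multc) simp
  also have "(\<integral>\<^sup>+xs. emeasure M (path_set n xs) \<partial>count_space ?Q) = emeasure M (state_set n y)"
    unfolding state_set_eq_UN_path_set by (rule emeasure_UN(1)[symmetric]) auto
  finally show ?thesis .
qed

lemma emeasure_state_set_Suc: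
  "emeasure M (state_set (Suc n) z)
     = (\<integral>\<^sup>+y. emeasure M (state_set n y \<inter> state_set (Suc n) z) \<partial>count_space UNIV)"
proof -
  have "state_set (Suc n) z = (\<Union>y. state_set n y \<inter> state_set (Suc n) z)"
    by (auto simp: state_set_def)
  moreover have "emeasure M (\<Union>y. state_set n y \<inter> state_set (Suc n) z)
      = (\<integral>\<^sup>+y. emeasure M (state_set n y \<inter> state_set (Suc n) z) \<partial>count_space UNIV)"
    by (rule emeasure_UN_countable) (auto simp: disjoint_family_on_def state_set_def)
  ultimately show ?thesis by simp
qed

lemma nn_integral_state_Suc:
  "(\<integral>\<^sup>+\<omega>. \<phi> (Xi (Suc n) \<omega>) \<partial>M) = (\<integral>\<^sup>+\<omega>. jump_op \<phi> (Xi n \<omega>) \<partial>M)"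
proof -
  have "(\<integral>\<^sup>+\<omega>. \<phi> (Xi (Suc n) \<omega>) \<partial>M)
      = (\<integral>\<^sup>+z. \<integral>\<^sup>+y. \<phi> z * (emeasure M (state_set n y) * ennreal (jumpP G y z))
           \<partial>count_space UNIV \<partial>count_space UNIV)"
    unfolding nn_integral_state
    by (intro nn_integral_cong) (simp add: emeasure_state_set_Suc emeasure_state_transition nn_integral_cmult)
  also have "\<dots> = (\<integral>\<^sup>+y. \<integral>\<^sup>+z. \<phi> z * (emeasure M (state_set n y) * ennreal (jumpP G y z))
           \<partial>count_space UNIV \<partial>count_space UNIV)"
    by (rule nn_integral_count_space_nn_integral) auto
  also have "\<dots> = (\<integral>\<^sup>+y. jump_op \<phi> y * emeasure M (state_set n y) \<partial>count_space UNIV)"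
    unfolding jump_op_def
    by (intro nn_integral_cong, subst nn_integral_multc[symmetric]) (auto intro!: nn_integral_cong simp: ac_simps)
  also have "\<dots> = (\<integral>\<^sup>+\<omega>. jump_op \<phi> (Xi n \<omega>) \<partial>M)"
    by (rule nn_integral_state[symmetric])
  finally show ?thesis .
qed

lemma nn_integral_state_eq_jump_op_iterate:
  "(\<integral>\<^sup>+\<omega>. \<phi> (Xi n \<omega>) \<partial>M) = (jump_op ^^ n) \<phi> x"
proof (induction n arbitrary: \<phi>)
  case 0
  have "(\<integral>\<^sup>+\<omega>. \<phi> (Xi 0 \<omega>) \<partial>M) = (\<integral>\<^sup>+y. \<phi> y * indicator {x} y \<partial>count_space UNIV)"
    unfolding nn_integral_state emeasure_state_set_0
    by (intro nn_integral_cong) (auto split: split_indicator)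
  then show ?case by simp
next
  case (Suc n)
  show ?case
    unfolding nn_integral_state_Suc Suc.IH by (simp add: funpow_Suc_right del: funpow.simps)
qed

lemma nn_integral_Ee: "(\<integral>\<^sup>+\<omega>. ennreal (Ee n \<omega>) \<partial>M) = 1"
proof -
  have "(\<integral>\<^sup>+\<omega>. ennreal (Ee n \<omega>) \<partial>M) = (\<integral>\<^sup>+t. ennreal (exponential_density 1 t) * ennreal t \<partial>lborel)"
    by (rule distributed_nn_integral[OF distributed_Ee, symmetric]) simp
  also have "\<dots> = (\<integral>\<^sup>+t. ennreal (erlang_density 0 1 t * t ^ 1) \<partial>lborel)"
    by (intro nn_integral_cong)
       (auto simp: exponential_density_def ennreal_mult'[symmetric] ennreal_neg)
  also have "\<dots> = 1"
    by (subst nn_integral_erlang_ith_moment) auto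
  finally show ?thesis .
qed

lemma prob_state_set_Ee_vimage:
  assumes "B \<in> sets borel"
  shows "prob (state_set n y \<inter> (Ee n -` B \<inter> space M)) = prob (state_set n y) * prob (Ee n -` B \<inter> space M)"
proof (rule indep_setD[OF indep_jumps_holdings])
  have "state_set n y = Xi n -` {y} \<inter> space M"
    by (auto simp: state_set_def)
  then show "state_set n y \<in> {(\<lambda>\<omega> n. Xi n \<omega>) -` S \<inter> space M | S. S \<in> sets (Pi\<^sub>M UNIV (\<lambda>_. count_space UNIV))}"
    using vimage_component_in_process_events[of "{y}" "count_space UNIV" Xi n] by simp
  show "Ee n -` B \<inter> space M \<in> {(\<lambda>\<omega> n. Ee n \<omega>) -` S \<inter> space M | S. S \<in> sets (Pi\<^sub>M UNIV (\<lambda>_. borel))}"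
    using vimage_component_in_process_events[of B borel Ee n] assms by simp
qed

lemma nn_integral_Ee_on_state_set:
  "(\<integral>\<^sup>+\<omega>. ennreal (Ee n \<omega>) * indicator (state_set n y) \<omega> \<partial>M) = emeasure M (state_set n y)"
proof -
  let ?K = "density M (indicator (state_set n y))"
  let ?D = "distr M borel (Ee n)"
  let ?c = "emeasure M (state_set n y)"
  have distr_restricted: "distr ?K borel (Ee n) = density ?D (\<lambda>_. ?c)"
  proof (rule measure_eqI)
    fix B assume "B \<in> sets (distr ?K borel (Ee n))"
    then have B[measurable]: "B \<in> sets borel" by simp
    have "emeasure (distr ?K borel (Ee n)) B = emeasure ?K (Ee n -` B \<inter> space M)"
      by (subst emeasure_distr) auto
    also have "\<dots> = (\<integral>\<^sup>+\<omega>. indicator (state_set n y) \<omega> * indicator (Ee n -` B \<inter> space M) \<omega> \<partial>M)"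
      by (rule emeasure_density) auto
    also have "\<dots> = emeasure M (Ee n -` B \<inter> space M \<inter> state_set n y)"
      by (subst nn_integral_indicator[symmetric], measurable, rule nn_integral_cong)
         (auto split: split_indicator)
    also have "\<dots> = ?c * emeasure ?D B"
      using prob_state_set_Ee_vimage[OF B, of n y]
      by (subst emeasure_distr) (auto simp: emeasure_eq_measure ennreal_mult'' Int_commute)
    also have "\<dots> = emeasure (density ?D (\<lambda>_. ?c)) B"
      by (subst emeasure_density_const) auto
    finally show "emeasure (distr ?K borel (Ee n)) B = emeasure (density ?D (\<lambda>_. ?c)) B" .
  qed simp
  have "(\<integral>\<^sup>+\<omega>. ennreal (Ee n \<omega>) * indicator (state_set n y) \<omega> \<partial>M) = (\<integral>\<^sup>+\<omega>. ennreal (Ee n \<omega>) \<partial>?K)"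
    by (subst nn_integral_density) (auto simp: ac_simps)
  also have "\<dots> = (\<integral>\<^sup>+t. ennreal t \<partial>distr ?K borel (Ee n))"
    by (rule nn_integral_distr[symmetric]) auto
  also have "\<dots> = (\<integral>\<^sup>+t. ?c * ennreal t \<partial>?D)"
    unfolding distr_restricted by (subst nn_integral_density) auto
  also have "\<dots> = ?c * (\<integral>\<^sup>+\<omega>. ennreal (Ee n \<omega>) \<partial>M)"
    by (subst nn_integral_cmult) (auto simp: nn_integral_distr)
  finally show ?thesis by (simp add: nn_integral_Ee)
qed

lemma nn_integral_holding_time:
  "(\<integral>\<^sup>+\<omega>. ennreal (Ee n \<omega> / gam G (Xi n \<omega>)) \<partial>M) = (\<integral>\<^sup>+\<omega>. mean_holding (Xi n \<omega>) \<partial>M)"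
proof -
  have "(\<integral>\<^sup>+\<omega>. ennreal (Ee n \<omega> / gam G (Xi n \<omega>)) \<partial>M)
      = (\<integral>\<^sup>+\<omega>. \<integral>\<^sup>+y. mean_holding y * (ennreal (Ee n \<omega>) * indicator (state_set n y) \<omega>)
           \<partial>count_space UNIV \<partial>M)"
  proof (intro nn_integral_cong)
    fix \<omega> assume "\<omega> \<in> space M"
    then have "\<And>y. indicator (state_set n y) \<omega> = (indicator {Xi n \<omega>} y :: ennreal)"
      by (auto simp: state_set_def split: split_indicator)
    moreover have "ennreal (Ee n \<omega> / gam G (Xi n \<omega>)) = mean_holding (Xi n \<omega>) * ennreal (Ee n \<omega>)"
      using gam_pos[of "Xi n \<omega>"]
      by (cases "0 \<le> Ee n \<omega>")
         (auto simp: mean_holding_def ennreal_mult'[symmetric] ennreal_neg divide_nonpos_pos)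
    ultimately show "ennreal (Ee n \<omega> / gam G (Xi n \<omega>))
        = (\<integral>\<^sup>+y. mean_holding y * (ennreal (Ee n \<omega>) * indicator (state_set n y) \<omega>) \<partial>count_space UNIV)"
      by (simp add: mult.assoc[symmetric])
  qed
  also have "\<dots> = (\<integral>\<^sup>+y. \<integral>\<^sup>+\<omega>. mean_holding y * (ennreal (Ee n \<omega>) * indicator (state_set n y) \<omega>)
           \<partial>M \<partial>count_space UNIV)"
    by (rule nn_integral_count_space_nn_integral) auto
  also have "\<dots> = (\<integral>\<^sup>+y. mean_holding y * emeasure M (state_set n y) \<partial>count_space UNIV)"
    by (intro nn_integral_cong) (simp add: nn_integral_cmult nn_integral_Ee_on_state_set)
  also have "\<dots> = (\<integral>\<^sup>+\<omega>. mean_holding (Xi n \<omega>) \<partial>M)"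
    by (rule nn_integral_state[symmetric])
  finally show ?thesis .
qed

lemma nn_integral_explosion_time: "(\<integral>\<^sup>+\<omega>. explosion_time G Xi Ee \<omega> \<partial>M) = green x"
proof -
  have "(\<integral>\<^sup>+\<omega>. explosion_time G Xi Ee \<omega> \<partial>M) = (\<Sum>n. \<integral>\<^sup>+\<omega>. ennreal (Ee n \<omega> / gam G (Xi n \<omega>)) \<partial>M)"
    unfolding explosion_time_def by (rule nn_integral_suminf) measurable
  also have "\<dots> = green x"
    by (simp add: green_def nn_integral_holding_time nn_integral_state_eq_jump_op_iterate)
  finally show ?thesis .
qed

end

section \<open>A canonical realisation\<close>

text \<open>
  The jump chain is driven by independent choices: \<open>c (n, y)\<close> is the state entered when
  the chain leaves \<open>y\<close> at its \<open>n\<close>-th jump, drawn from \<open>P(y, \<cdot>)\<close>. Since the chain visits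
  at most one state per step, distinct steps use distinct, hence independent, choices.
\<close>

primrec follow_choices :: "'a \<Rightarrow> nat \<Rightarrow> (nat \<times> 'a \<Rightarrow> 'a) \<Rightarrow> 'a" where
  "follow_choices x0 0 c = x0"
| "follow_choices x0 (Suc n) c = c (n, follow_choices x0 n c)"

lemma follow_choices_path_iff:
  assumes "xs 0 = x0"
  shows "(\<forall>i\<le>n. follow_choices x0 i c = xs i) \<longleftrightarrow> (\<forall>i<n. c (i, xs i) = xs (Suc i))"
proof (induction n)
  case 0
  then show ?case using assms by simp
next
  case (Suc n)
  have "(\<forall>i\<le>Suc n. follow_choices x0 i c = xs i)
      \<longleftrightarrow> (\<forall>i\<le>n. follow_choices x0 i c = xs i) \<and> follow_choices x0 (Suc n) c = xs (Suc n)"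
    by (auto simp: le_Suc_eq)
  also have "\<dots> \<longleftrightarrow> (\<forall>i<n. c (i, xs i) = xs (Suc i)) \<and> c (n, xs n) = xs (Suc n)"
    using Suc.IH by auto
  also have "\<dots> \<longleftrightarrow> (\<forall>i<Suc n. c (i, xs i) = xs (Suc i))"
    by (auto simp: less_Suc_eq)
  finally show ?case .
qed

definition Exp1 :: "real measure" where
  "Exp1 = density lborel (\<lambda>t. ennreal (exponential_density 1 t))"

lemma sets_Exp1[simp, measurable_cong]: "sets Exp1 = sets borel"
  by (simp add: Exp1_def)

lemma space_Exp1[simp]: "space Exp1 = UNIV"
  by (simp add: Exp1_def)

lemma prob_space_Exp1: "prob_space Exp1"
  unfolding Exp1_def by (rule prob_space_exponential_density) simp

definition clock_space :: "(nat \<Rightarrow> real) measure" where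
  "clock_space = PiM UNIV (\<lambda>_. Exp1)"

lemma prob_space_clock_space: "prob_space clock_space"
  unfolding clock_space_def by (rule prob_space_PiM) (rule prob_space_Exp1)

lemma space_clock_space[simp]: "space clock_space = UNIV"
  by (simp add: clock_space_def space_PiM)

lemma sets_clock_space: "sets clock_space = sets (PiM UNIV (\<lambda>_. borel :: real measure))"
  unfolding clock_space_def by (rule sets_PiM_cong) auto

lemma measurable_clock_space_component: "(\<lambda>t. t n) \<in> measurable clock_space lborel"
proof -
  have "(\<lambda>t. t n) \<in> measurable clock_space Exp1"
    unfolding clock_space_def by (rule measurable_component_singleton) simp
  then show ?thesis
    using measurable_cong_sets[of clock_space clock_space Exp1 lborel] by simp
qed

abbreviation path_space :: "(nat \<Rightarrow> 'a \<times> real) measure" where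
  "path_space \<equiv> PiM UNIV (\<lambda>_. count_space UNIV \<Otimes>\<^sub>M lborel)"

lemma measurable_path_state: "(\<lambda>\<omega>. fst (\<omega> n)) \<in> measurable path_space (count_space UNIV)"
  by (rule measurable_compose[OF measurable_component_singleton[of n UNIV] measurable_fst]) simp

lemma measurable_path_clock: "(\<lambda>\<omega>. snd (\<omega> n)) \<in> measurable path_space lborel"
  by (rule measurable_compose[OF measurable_component_singleton[of n UNIV] measurable_snd]) simp

lemma measurable_path_states:
  "(\<lambda>\<omega> n. fst (\<omega> n)) \<in> measurable path_space (PiM UNIV (\<lambda>_. count_space UNIV))"
  by (rule measurable_PiM_single') (auto intro: measurable_path_state)

lemma measurable_path_clocks:
  "(\<lambda>\<omega> n. snd (\<omega> n)) \<in> measurable path_space (PiM UNIV (\<lambda>_. borel :: real measure))"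
proof (rule measurable_PiM_single')
  show "(\<lambda>\<omega>. snd (\<omega> n)) \<in> measurable path_space borel" for n
    using measurable_path_clock[of n] measurable_cong_sets[of path_space path_space lborel borel] by simp
qed auto

context jump_rates
begin

definition jump_pmf :: "'a \<Rightarrow> 'a pmf" where
  "jump_pmf y = embed_pmf (jumpP G y)"

lemma pmf_jump_pmf: "pmf (jump_pmf y) z = jumpP G y z"
  unfolding jump_pmf_def by (rule pmf_embed_pmf) (auto simp: jumpP_nonneg nn_integral_jumpP)

definition choice_space :: "(nat \<times> 'a \<Rightarrow> 'a) measure" where
  "choice_space = PiM UNIV (\<lambda>p. measure_pmf (jump_pmf (snd p)))"

lemma prob_space_choice_space: "prob_space choice_space"
  unfolding choice_space_def by (rule prob_space_PiM) (rule prob_space_measure_pmf)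

lemma space_choice_space[simp]: "space choice_space = UNIV"
  by (simp add: choice_space_def space_PiM)

lemma measurable_choice: "(\<lambda>c. c p) \<in> measurable choice_space (count_space UNIV)"
proof -
  have "(\<lambda>c. c p) \<in> measurable choice_space (measure_pmf (jump_pmf (snd p)))"
    unfolding choice_space_def by (rule measurable_component_singleton) simp
  then show ?thesis
    by (simp add: measurable_cong_sets)
qed

lemma measurable_follow_choices[measurable]:
  "follow_choices x0 n \<in> measurable choice_space (count_space UNIV)"
proof (induction n)
  case 0
  then show ?case by simp
next
  case (Suc n)
  have "(\<lambda>c. (\<lambda>y c. c (n, y)) (follow_choices x0 n c) c) \<in> measurable choice_space (count_space UNIV)"
    by (rule measurable_compose_countable[OF measurable_choice Suc.IH])
  then show ?case by simp
qed

lemma measurable_follow_choices_process: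
  "(\<lambda>c n. follow_choices x0 n c) \<in> measurable choice_space (PiM UNIV (\<lambda>_. count_space UNIV))"
  by (rule measurable_PiM_single') auto

lemma measure_choice_space_path:
  "measure choice_space {c. \<forall>i\<le>n. follow_choices x0 i c = xs i}
     = (if xs 0 = x0 then 1 else 0) * (\<Prod>i<n. jumpP G (xs i) (xs (Suc i)))"
proof (cases "xs 0 = x0")
  case False
  then have "{c. \<forall>i\<le>n. follow_choices x0 i c = xs i} = {}"
    by (auto dest: spec[of _ 0])
  then show ?thesis
    using False by (simp only:) simp
next
  case True
  let ?Mc = "\<lambda>p::nat \<times> 'a. measure_pmf (jump_pmf (snd p))"
  define J where "J = (\<lambda>i. (i, xs i)) ` {..<n}"
  have inj: "inj_on (\<lambda>i. (i, xs i)) {..<n}"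
    by (auto simp: inj_on_def)
  have cylinder: "{c. \<forall>i\<le>n. follow_choices x0 i c = xs i}
      = prod_emb UNIV ?Mc J (Pi\<^sub>E J (\<lambda>j. {xs (Suc (fst j))}))"
    unfolding follow_choices_path_iff[of xs x0, OF True] J_def
    by (auto simp: prod_emb_iff restrict_PiE_iff Pi_iff)
  have "emeasure choice_space (prod_emb UNIV ?Mc J (Pi\<^sub>E J (\<lambda>j. {xs (Suc (fst j))})))
      = (\<Prod>j\<in>J. emeasure (?Mc j) {xs (Suc (fst j))})"
    unfolding choice_space_def
    by (rule emeasure_PiM_emb) (auto simp: J_def prob_space_measure_pmf)
  also have "\<dots> = ennreal (\<Prod>i<n. jumpP G (xs i) (xs (Suc i)))"
    unfolding J_def
    by (simp add: prod.reindex[OF inj] emeasure_pmf_single pmf_jump_pmf prod_ennreal jumpP_nonneg)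
  finally show ?thesis
    using True unfolding cylinder measure_def by (simp add: prod_nonneg jumpP_nonneg)
qed

definition canonical_space :: "((nat \<times> 'a \<Rightarrow> 'a) \<times> (nat \<Rightarrow> real)) measure" where
  "canonical_space = choice_space \<Otimes>\<^sub>M clock_space"

lemma prob_space_canonical_space: "prob_space canonical_space"
  unfolding canonical_space_def
  by (rule prob_space_pair[OF prob_space_choice_space prob_space_clock_space])

lemma space_canonical_space[simp]: "space canonical_space = UNIV"
  by (simp add: canonical_space_def space_pair_measure)

lemma emeasure_canonical_space_Times:
  assumes "A \<in> sets choice_space" "B \<in> sets clock_space"
  shows "emeasure canonical_space (A \<times> B) = emeasure choice_space A * emeasure clock_space B"
proof -
  interpret clocks: prob_space clock_space by (rule prob_space_clock_space)
  show ?thesis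
    unfolding canonical_space_def by (rule clocks.emeasure_pair_measure_Times[OF assms])
qed

lemma measure_canonical_space_Times:
  assumes "A \<in> sets choice_space" "B \<in> sets clock_space"
  shows "measure canonical_space (A \<times> B) = measure choice_space A * measure clock_space B"
  unfolding measure_def emeasure_canonical_space_Times[OF assms] by (simp add: enn2real_mult)

lemma distr_canonical_space_snd:
  assumes f: "f \<in> measurable clock_space K"
  shows "distr canonical_space K (\<lambda>\<omega>. f (snd \<omega>)) = distr clock_space K f"
proof (rule measure_eqI)
  interpret choices: prob_space choice_space by (rule prob_space_choice_space)
  have fm: "(\<lambda>\<omega>. f (snd \<omega>)) \<in> measurable canonical_space K"
    unfolding canonical_space_def by (rule measurable_compose[OF measurable_snd f])
  fix B assume "B \<in> sets (distr canonical_space K (\<lambda>\<omega>. f (snd \<omega>)))"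
  then have B: "B \<in> sets K" by simp
  have "(\<lambda>\<omega>. f (snd \<omega>)) -` B \<inter> space canonical_space = UNIV \<times> (f -` B \<inter> space clock_space)"
    by auto
  moreover have "f -` B \<inter> space clock_space \<in> sets clock_space"
    using f B by (rule measurable_sets)
  moreover have "UNIV \<in> sets choice_space"
    using sets.top[of choice_space] by simp
  ultimately show "emeasure (distr canonical_space K (\<lambda>\<omega>. f (snd \<omega>))) B = emeasure (distr clock_space K f) B"
    using B fm f choices.emeasure_space_1
    by (simp add: emeasure_distr emeasure_canonical_space_Times)
qed simp

definition canonical_map :: "'a \<Rightarrow> (nat \<times> 'a \<Rightarrow> 'a) \<times> (nat \<Rightarrow> real) \<Rightarrow> nat \<Rightarrow> 'a \<times> real" where
  "canonical_map x0 \<omega> = (\<lambda>n. (follow_choices x0 n (fst \<omega>), snd \<omega> n))"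

lemma measurable_canonical_map: "canonical_map x0 \<in> measurable canonical_space path_space"
  unfolding canonical_map_def
proof (rule measurable_PiM_single')
  fix n :: nat
  have "(\<lambda>\<omega>. follow_choices x0 n (fst \<omega>)) \<in> measurable canonical_space (count_space UNIV)"
    unfolding canonical_space_def by (rule measurable_compose[OF measurable_fst measurable_follow_choices])
  moreover have "(\<lambda>\<omega>. snd \<omega> n) \<in> measurable canonical_space lborel"
    unfolding canonical_space_def
    by (rule measurable_compose[OF measurable_snd measurable_clock_space_component])
  ultimately show "(\<lambda>\<omega>. (follow_choices x0 n (fst \<omega>), snd \<omega> n))
      \<in> measurable canonical_space (count_space UNIV \<Otimes>\<^sub>M lborel)"
    by (rule measurable_Pair)
qed (auto simp: space_pair_measure)

definition canonical_model :: "'a \<Rightarrow> (nat \<Rightarrow> 'a \<times> real) measure" where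
  "canonical_model x0 = distr canonical_space path_space (canonical_map x0)"

lemma prob_space_canonical_model: "prob_space (canonical_model x0)"
proof -
  interpret prob_space canonical_space by (rule prob_space_canonical_space)
  show ?thesis
    unfolding canonical_model_def by (rule prob_space_distr[OF measurable_canonical_map])
qed

lemma sets_canonical_model[simp, measurable_cong]: "sets (canonical_model x0) = sets path_space"
  by (simp add: canonical_model_def)

lemma space_canonical_model[simp]: "space (canonical_model x0) = UNIV"
  by (simp add: canonical_model_def space_PiM space_pair_measure)

lemma measure_canonical_model:
  "A \<in> sets path_space \<Longrightarrow>
     measure (canonical_model x0) A = measure canonical_space (canonical_map x0 -` A)"
  using measure_distr[OF measurable_canonical_map] by (simp add: canonical_model_def)

lemma measure_canonical_path:
  "measure (canonical_model x0) {\<omega> \<in> space (canonical_model x0). \<forall>i\<le>n. fst (\<omega> i) = xs i}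
     = (if xs 0 = x0 then 1 else 0) * (\<Prod>i<n. jumpP G (xs i) (xs (Suc i)))"
proof -
  interpret clocks: prob_space clock_space by (rule prob_space_clock_space)
  let ?S = "{\<omega> \<in> space (canonical_model x0). \<forall>i\<le>n. fst (\<omega> i) = xs i}"
  let ?C = "{c. \<forall>i\<le>n. follow_choices x0 i c = xs i}"
  have "?S = (\<Inter>i\<in>{..n}. (\<lambda>\<omega>. fst (\<omega> i)) -` {xs i} \<inter> space path_space)"
    by (auto simp: space_PiM space_pair_measure)
  then have S: "?S \<in> sets path_space"
    using measurable_sets[OF measurable_path_state] by auto
  have "?C = (\<Inter>i\<in>{..n}. follow_choices x0 i -` {xs i} \<inter> space choice_space)"
    by auto
  then have C: "?C \<in> sets choice_space"
    using measurable_sets[OF measurable_follow_choices] by auto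
  have "canonical_map x0 -` ?S = ?C \<times> UNIV"
    by (auto simp: canonical_map_def)
  then have "measure (canonical_model x0) ?S = measure canonical_space (?C \<times> space clock_space)"
    using measure_canonical_model[OF S] by simp
  also have "\<dots> = measure choice_space ?C"
    using measure_canonical_space_Times[OF C sets.top] clocks.prob_space by simp
  finally show ?thesis
    by (simp add: measure_choice_space_path)
qed

lemma distr_canonical_clocks:
  "distr (canonical_model x0) (PiM UNIV (\<lambda>_. borel)) (\<lambda>\<omega> n. snd (\<omega> n)) = clock_space"
proof -
  have "distr (canonical_model x0) (PiM UNIV (\<lambda>_. borel)) (\<lambda>\<omega> n. snd (\<omega> n))
      = distr canonical_space (PiM UNIV (\<lambda>_. borel)) ((\<lambda>\<omega> n. snd (\<omega> n)) \<circ> canonical_map x0)"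
    unfolding canonical_model_def by (rule distr_distr[OF measurable_path_clocks measurable_canonical_map])
  also have "\<dots> = distr canonical_space (PiM UNIV (\<lambda>_. borel)) (\<lambda>\<omega>. id (snd \<omega>))"
    by (simp add: canonical_map_def o_def id_def)
  also have "\<dots> = distr clock_space (PiM UNIV (\<lambda>_. borel)) id"
    by (rule distr_canonical_space_snd) (simp add: measurable_ident_sets sets_clock_space id_def)
  also have "\<dots> = clock_space"
    unfolding id_def by (rule distr_id2) (simp add: sets_clock_space)
  finally show ?thesis .
qed

lemma distr_canonical_clock: "distr (canonical_model x0) lborel (\<lambda>\<omega>. snd (\<omega> n)) = Exp1"
proof -
  have "distr (canonical_model x0) lborel (\<lambda>\<omega>. snd (\<omega> n))
      = distr canonical_space lborel ((\<lambda>\<omega>. snd (\<omega> n)) \<circ> canonical_map x0)"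
    unfolding canonical_model_def by (rule distr_distr[OF measurable_path_clock measurable_canonical_map])
  also have "\<dots> = distr canonical_space lborel (\<lambda>\<omega>. (\<lambda>t. t n) (snd \<omega>))"
    by (simp add: canonical_map_def o_def)
  also have "\<dots> = distr clock_space lborel (\<lambda>t. t n)"
    by (rule distr_canonical_space_snd[OF measurable_clock_space_component])
  also have "\<dots> = distr clock_space Exp1 (\<lambda>t. t n)"
    by (rule distr_cong) auto
  also have "\<dots> = Exp1"
    unfolding clock_space_def by (rule distr_PiM_component) (auto intro: prob_space_Exp1)
  finally show ?thesis .
qed

lemma indep_vars_canonical_clocks:
  "prob_space.indep_vars (canonical_model x0) (\<lambda>_. borel) (\<lambda>n \<omega>. snd (\<omega> n)) UNIV"
proof -
  interpret prob_space "canonical_model x0" by (rule prob_space_canonical_model)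
  have rv: "random_variable borel (\<lambda>\<omega>. snd (\<omega> i))" for i
    using measurable_path_clock[of i] measurable_cong_sets[of "canonical_model x0" path_space lborel borel]
    by simp
  have "distr (canonical_model x0) borel (\<lambda>\<omega>. snd (\<omega> i)) = Exp1" for i
    using distr_canonical_clock[of x0 i] by (metis distr_cong sets_lborel)
  then have "distr (canonical_model x0) (PiM UNIV (\<lambda>_. borel)) (\<lambda>\<omega>. \<lambda>i\<in>UNIV. snd (\<omega> i))
      = PiM UNIV (\<lambda>i. distr (canonical_model x0) borel (\<lambda>\<omega>. snd (\<omega> i)))"
    by (simp add: restrict_UNIV distr_canonical_clocks clock_space_def)
  then show ?thesis
    by (subst indep_vars_iff_distr_eq_PiM[OF _ rv]) auto
qed

lemma indep_set_canonical_states_clocks: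
  "prob_space.indep_set (canonical_model x0)
     {(\<lambda>\<omega> n. fst (\<omega> n)) -` S \<inter> space (canonical_model x0) | S. S \<in> sets (Pi\<^sub>M UNIV (\<lambda>_. count_space UNIV))}
     {(\<lambda>\<omega> n. snd (\<omega> n)) -` S \<inter> space (canonical_model x0) | S. S \<in> sets (Pi\<^sub>M UNIV (\<lambda>_. borel))}"
proof -
  interpret prob_space "canonical_model x0" by (rule prob_space_canonical_model)
  interpret clocks: prob_space clock_space by (rule prob_space_clock_space)
  interpret choices: prob_space choice_space by (rule prob_space_choice_space)
  let ?Y = "\<lambda>c n. follow_choices x0 n c"
  show ?thesis
  proof (rule indep_setI)
    show "{(\<lambda>\<omega> n. fst (\<omega> n)) -` S \<inter> space (canonical_model x0) | S. S \<in> sets (Pi\<^sub>M UNIV (\<lambda>_. count_space UNIV))} \<subseteq> events"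
      using measurable_sets[OF measurable_path_states] by (auto simp: space_PiM space_pair_measure)
    show "{(\<lambda>\<omega> n. snd (\<omega> n)) -` S \<inter> space (canonical_model x0) | S. S \<in> sets (Pi\<^sub>M UNIV (\<lambda>_. borel))} \<subseteq> events"
      using measurable_sets[OF measurable_path_clocks] by (auto simp: space_PiM space_pair_measure)
  next
    fix a b
    assume "a \<in> {(\<lambda>\<omega> n. fst (\<omega> n)) -` S \<inter> space (canonical_model x0) | S. S \<in> sets (Pi\<^sub>M UNIV (\<lambda>_. count_space UNIV))}"
      and "b \<in> {(\<lambda>\<omega> n. snd (\<omega> n)) -` S \<inter> space (canonical_model x0) | S. S \<in> sets (Pi\<^sub>M UNIV (\<lambda>_. borel))}"
    then obtain S S' where S: "S \<in> sets (Pi\<^sub>M UNIV (\<lambda>_. count_space UNIV))"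
        "a = (\<lambda>\<omega> n. fst (\<omega> n)) -` S \<inter> space (canonical_model x0)"
      and S': "S' \<in> sets (Pi\<^sub>M UNIV (\<lambda>_. borel))"
        "b = (\<lambda>\<omega> n. snd (\<omega> n)) -` S' \<inter> space (canonical_model x0)"
      by blast
    have a: "a \<in> sets path_space"
      using measurable_sets[OF measurable_path_states S(1)] S(2) by (simp add: space_PiM space_pair_measure)
    have b: "b \<in> sets path_space"
      using measurable_sets[OF measurable_path_clocks S'(1)] S'(2) by (simp add: space_PiM space_pair_measure)
    have SY: "?Y -` S \<in> sets choice_space"
      using measurable_sets[OF measurable_follow_choices_process S(1)] by simp
    have S'_clocks: "S' \<in> sets clock_space"
      using S'(1) sets_clock_space by simp
    have "canonical_map x0 -` a = (?Y -` S) \<times> UNIV"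
      "canonical_map x0 -` b = UNIV \<times> S'"
      "canonical_map x0 -` (a \<inter> b) = (?Y -` S) \<times> S'"
      using S(2) S'(2) by (auto simp: canonical_map_def)
    then have "prob (a \<inter> b) = measure choice_space (?Y -` S) * measure clock_space S'"
      and "prob a = measure choice_space (?Y -` S)"
      and "prob b = measure clock_space S'"
      using a b SY S'_clocks sets.top[of choice_space] sets.top[of clock_space]
        choices.prob_space clocks.prob_space
      by (simp_all add: measure_canonical_model measure_canonical_space_Times)
    then show "prob (a \<inter> b) = prob a * prob b" by simp
  qed
qed

lemma ctmc_model_canonical:
  "ctmc_model G x0 (canonical_model x0) (\<lambda>n \<omega>. fst (\<omega> n)) (\<lambda>n \<omega>. snd (\<omega> n))"
proof -
  have "distributed (canonical_model x0) lborel (\<lambda>\<omega>. snd (\<omega> n)) (\<lambda>t. ennreal (exponential_density 1 t))" for n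
    using measurable_path_clock[of n] distr_canonical_clock[of x0 n]
    by (simp add: distributed_def Exp1_def measurable_cong_sets[OF sets_canonical_model])
  moreover have "(\<lambda>\<omega>. fst (\<omega> n)) \<in> measurable (canonical_model x0) (count_space UNIV)" for n
    using measurable_path_state[of n] by (simp add: measurable_cong_sets[OF sets_canonical_model])
  ultimately show ?thesis
    unfolding ctmc_model_def
    using prob_space_canonical_model measure_canonical_path indep_vars_canonical_clocks
      indep_set_canonical_states_clocks
    by blast
qed

end

theorem theorem1p3:
  fixes \<Gamma> :: "'a :: countable \<Rightarrow> 'a \<Rightarrow> real"
  assumes "infinite (UNIV :: 'a set)"
    and "rate_matrix \<Gamma>"
    and "irreducible_jump \<Gamma>"
  shows "(\<exists>f \<in> Dom_plus \<Gamma>. \<exists>\<epsilon>::real. (\<forall>x. 0 < f x) \<and> 0 < \<epsilon> \<and>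
            (\<forall>x. gen_apply \<Gamma> f x \<le> - \<epsilon>))
     \<longleftrightarrow>
     (\<forall>x. \<forall>(M :: (nat \<Rightarrow> 'a \<times> real) measure) Xi Ee. ctmc_model \<Gamma> x M Xi Ee \<longrightarrow>
            (\<integral>\<^sup>+ \<omega>. explosion_time \<Gamma> Xi Ee \<omega> \<partial>M) < \<infinity>)"
proof -
  interpret jump_rates \<Gamma> by unfold_locales (rule assms(2))
  have expected_explosion_time:
    "(\<integral>\<^sup>+ \<omega>. explosion_time \<Gamma> Xi Ee \<omega> \<partial>M) = green x" if "ctmc_model \<Gamma> x M Xi Ee" for x M Xi Ee
  proof -
    interpret ctmc_realisation \<Gamma> x M Xi Ee by unfold_locales (rule that)
    show ?thesis by (rule nn_integral_explosion_time)
  qed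
  show ?thesis
  proof
    assume "\<exists>f \<in> Dom_plus \<Gamma>. \<exists>\<epsilon>::real. (\<forall>x. 0 < f x) \<and> 0 < \<epsilon> \<and> (\<forall>x. gen_apply \<Gamma> f x \<le> - \<epsilon>)"
    then obtain f \<epsilon> where "f \<in> Dom_plus \<Gamma>" "0 < \<epsilon>" "\<And>x. gen_apply \<Gamma> f x \<le> - \<epsilon>"
      by blast
    then show "\<forall>x M Xi Ee. ctmc_model \<Gamma> x M Xi Ee \<longrightarrow> (\<integral>\<^sup>+ \<omega>. explosion_time \<Gamma> Xi Ee \<omega> \<partial>M) < \<infinity>"
      using green_finite_if_lyapunov by (simp add: expected_explosion_time)
  next
    assume "\<forall>x (M :: (nat \<Rightarrow> 'a \<times> real) measure) Xi Ee. ctmc_model \<Gamma> x M Xi Ee \<longrightarrow>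
      (\<integral>\<^sup>+ \<omega>. explosion_time \<Gamma> Xi Ee \<omega> \<partial>M) < \<infinity>"
    then have "green x < \<infinity>" for x
      using ctmc_model_canonical[of x] by (auto simp: expected_explosion_time)
    then show "\<exists>f \<in> Dom_plus \<Gamma>. \<exists>\<epsilon>::real. (\<forall>x. 0 < f x) \<and> 0 < \<epsilon> \<and> (\<forall>x. gen_apply \<Gamma> f x \<le> - \<epsilon>)"
      by (rule lyapunov_if_green_finite)
  qed
qed

end
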